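(* Let $x_1,x_2,\dots$ be a sequence of vectors in $\mathbb{R}^n$. Suppose there is a function $C:\mathbb{N}^n\to\mathbb{R}\setminus\{0\}$ such that for every $m\in\mathbb{N}$, $\sum_{\substack{m_1+\cdots+m_n=m\\ 0<m_1<\cdots<m_n}} C(m_1,\dots,m_n)\det[x_{m_1},x_{m_2},\dots,x_{m_n}]=0$. Then the sequence $(x_i)$ is contained in a proper linear subspace of $\mathbb{R}^n$.
   Context: $[x_{m_1},\dots,x_{m_n}]$ denotes the $n\times n$ matrix with these columns; the sum is over integer tuples. *)

theory Defs
  imports "HOL-Analysis.Analysis"
begin

end

theory Submission
  imports Defs
begin

(* If the x_i span R^n, select greedily the indices g_1 < ... < g_n of those x_j that are
   not in the span of their predecessors; the x_(g_k) form a basis.  Any increasing t with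
   det[x_(t_1), ..., x_(t_n)] <> 0 satisfies t_k >= g_k for all k, for otherwise
   x_(t_1), ..., x_(t_k) would be k independent vectors in the span of x_(g_1), ..., x_(g_(k-1)).
   So for m = g_1 + ... + g_n the only nonzero term of the sum is C(g) det[x_(g_1), ..., x_(g_n)]. *)

definition greedy_indices :: "(nat \<Rightarrow> 'a::real_vector) \<Rightarrow> nat set \<Rightarrow> nat set" where
  "greedy_indices x S = {j \<in> S. x j \<notin> span (x ` {i \<in> S. i < j})}"

lemma span_greedy_indices_prefix:
  "span (x ` (greedy_indices x S \<inter> {..<a})) = span (x ` {i \<in> S. i < a})"
proof (induction a)
  case 0
  then show ?case by simp
next
  case (Suc a)
  have less_Suc: "{i \<in> S. i < Suc a} = (if a \<in> S then insert a else id) {i \<in> S. i < a}"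
    and greedy_less_Suc: "greedy_indices x S \<inter> {..<Suc a} =
      (if a \<in> greedy_indices x S then insert a else id) (greedy_indices x S \<inter> {..<a})"
    by (auto simp: less_Suc_eq)
  consider "a \<in> greedy_indices x S" | "a \<in> S" "a \<notin> greedy_indices x S" | "a \<notin> S"
    by blast
  then show ?case
  proof cases
    case 1
    then have "a \<in> S" by (simp add: greedy_indices_def)
    with 1 show ?thesis
      unfolding less_Suc greedy_less_Suc by (simp add: span_insert Suc.IH)
  next
    case 2
    then have "x a \<in> span (x ` {i \<in> S. i < a})" by (simp add: greedy_indices_def)
    with 2 show ?thesis
      unfolding less_Suc greedy_less_Suc by (simp add: span_redundant Suc.IH)
  next
    case 3
    then have "a \<notin> greedy_indices x S" by (simp add: greedy_indices_def)
    with 3 show ?thesis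
      unfolding less_Suc greedy_less_Suc by (simp add: Suc.IH)
  qed
qed

lemma independent_greedy_indices_prefix:
  "independent (x ` (greedy_indices x S \<inter> {..<a})) \<and> inj_on x (greedy_indices x S \<inter> {..<a})"
proof (induction a)
  case 0
  then show ?case by (simp add: independent_empty)
next
  case (Suc a)
  show ?case
  proof (cases "a \<in> greedy_indices x S")
    case True
    have "x a \<notin> span (x ` {i \<in> S. i < a})"
      using True unfolding greedy_indices_def by blast
    then have new: "x a \<notin> span (x ` (greedy_indices x S \<inter> {..<a}))"
      unfolding span_greedy_indices_prefix .
    then have "x a \<notin> x ` (greedy_indices x S \<inter> {..<a})"
      by (meson span_base)
    moreover have "greedy_indices x S \<inter> {..<Suc a} = insert a (greedy_indices x S \<inter> {..<a})"
      using True by auto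
    ultimately show ?thesis
      using Suc.IH independent_insertI[OF new] by simp
  next
    case False
    then have "greedy_indices x S \<inter> {..<Suc a} = greedy_indices x S \<inter> {..<a}"
      by (auto simp: less_Suc_eq)
    then show ?thesis using Suc.IH by simp
  qed
qed

lemma inj_on_greedy_indices: "inj_on x (greedy_indices x S)"
proof (rule inj_onI)
  fix i j assume "i \<in> greedy_indices x S" "j \<in> greedy_indices x S" "x i = x j"
  moreover have "inj_on x (greedy_indices x S \<inter> {..<Suc (max i j)})"
    using independent_greedy_indices_prefix by blast
  ultimately show "i = j" by (auto dest: inj_onD)
qed

lemma independent_greedy_indices: "independent (x ` greedy_indices x S)"
  unfolding independent_explicit_finite_subsets
proof (intro allI impI)
  fix T u assume T: "T \<subseteq> x ` greedy_indices x S" "finite T" and "(\<Sum>v\<in>T. u v *\<^sub>R v) = 0"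
  obtain F where F: "F \<subseteq> greedy_indices x S" "finite F" "T = x ` F"
    using T finite_subset_image by metis
  obtain a where "F \<subseteq> {..<a}"
    using F(2) finite_nat_bounded by blast
  then have "T \<subseteq> x ` (greedy_indices x S \<inter> {..<a})"
    using F by blast
  with independent_greedy_indices_prefix[of x S a] show "\<forall>v\<in>T. u v = 0"
    unfolding independent_explicit_finite_subsets using T(2) \<open>(\<Sum>v\<in>T. u v *\<^sub>R v) = 0\<close> by blast
qed

lemma span_greedy_indices: "span (x ` greedy_indices x S) = span (x ` S)"
proof
  show "span (x ` greedy_indices x S) \<subseteq> span (x ` S)"
    by (intro span_mono image_mono) (auto simp: greedy_indices_def)
  have "x i \<in> span (x ` greedy_indices x S)" if "i \<in> S" for i
  proof -
    have "x i \<in> span (x ` {j \<in> S. j < Suc i})"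
      using that by (intro span_base) auto
    also have "\<dots> = span (x ` (greedy_indices x S \<inter> {..<Suc i}))"
      by (rule span_greedy_indices_prefix[symmetric])
    also have "\<dots> \<subseteq> span (x ` greedy_indices x S)"
      by (intro span_mono image_mono) auto
    finally show ?thesis .
  qed
  then show "span (x ` S) \<subseteq> span (x ` greedy_indices x S)"
    by (intro span_minimal subspace_span) auto
qed

lemma
  fixes x :: "nat \<Rightarrow> 'a::euclidean_space"
  shows finite_greedy_indices: "finite (greedy_indices x S)"
    and card_greedy_indices: "card (greedy_indices x S) = dim (x ` S)"
proof -
  have "finite (x ` greedy_indices x S)"
    using independent_bound independent_greedy_indices by blast
  then show "finite (greedy_indices x S)"
    using inj_on_greedy_indices finite_image_iff by blast
  have "card (greedy_indices x S) = card (x ` greedy_indices x S)"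
    using inj_on_greedy_indices by (rule card_image[symmetric])
  also have "\<dots> = dim (x ` greedy_indices x S)"
    using independent_greedy_indices by (rule dim_eq_card_independent[symmetric])
  also have "\<dots> = dim (x ` S)"
    by (metis dim_span span_greedy_indices)
  finally show "card (greedy_indices x S) = dim (x ` S)" .
qed

lemma det_rows_nonzero_iff:
  fixes v :: "'n::finite \<Rightarrow> real ^ 'n"
  shows "det (\<chi> i. v i) \<noteq> 0 \<longleftrightarrow> inj v \<and> independent (range v)"
proof -
  have rows: "rows (\<chi> i. v i) = range v"
    by (auto simp: rows_def row_def)
  show ?thesis
  proof
    assume det: "det (\<chi> i. v i) \<noteq> 0"
    have "inj v"
    proof (rule injI, rule ccontr)
      fix i j assume "v i = v j" "i \<noteq> j"
      then have "det (\<chi> i. v i) = 0"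
        by (intro det_identical_rows[of i j]) (auto simp: row_def)
      with det show False by simp
    qed
    moreover have "independent (range v)"
      using det det_dependent_rows[of "\<chi> i. v i"] by (auto simp: rows dependent_vec_eq)
    ultimately show "inj v \<and> independent (range v)" ..
  next
    assume "inj v \<and> independent (range v)"
    then have "rank (\<chi> i. v i) = CARD('n)"
      by (simp add: row_rank_def rows dim_eq_card_independent card_image)
    then show "det (\<chi> i. v i) \<noteq> 0"
      by (simp add: det_eq_0_rank)
  qed
qed

lemma ex_strict_mono_onto_finite:
  fixes M :: "'b::wellorder set"
  assumes "finite M" "card M = CARD('a::{finite,linorder})"
  obtains g :: "'a::{finite,linorder} \<Rightarrow> 'b" where "strict_mono g" "range g = M"
proof
  define r :: "'a \<Rightarrow> nat" where "r k = card {j. j < k}" for k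
  have r_less: "r k < card M" for k
    unfolding r_def assms(2) by (intro psubset_card_mono) auto
  have "strict_mono r"
    unfolding r_def by (intro strict_monoI psubset_card_mono) auto
  then show mono: "strict_mono (enumerate M \<circ> r)"
    using assms(1) r_less by (auto intro!: strict_monoI finite_enumerate_mono dest: strict_monoD)
  show "range (enumerate M \<circ> r) = M"
  proof (rule card_subset_eq[OF assms(1)])
    show "range (enumerate M \<circ> r) \<subseteq> M"
      using assms(1) r_less by (auto intro: finite_enumerate_in_set)
    show "card (range (enumerate M \<circ> r)) = card M"
      using card_image[OF strict_mono_imp_inj_on[OF mono]] assms(2) by simp
  qed
qed

lemma greedy_indices_enumeration_le:
  fixes x :: "nat \<Rightarrow> 'a::real_vector" and g t :: "'n::{finite,linorder} \<Rightarrow> nat"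
  assumes g: "strict_mono g" "range g = greedy_indices x S"
    and t: "strict_mono t" "range t \<subseteq> S"
    and indep: "inj (\<lambda>j. x (t j))" "independent (range (\<lambda>j. x (t j)))"
  shows "g k \<le> t k"
proof (rule ccontr)
  assume "\<not> g k \<le> t k"
  then have less: "t k < g k" by simp
  have "greedy_indices x S \<inter> {..<g k} = g ` {..<k}"
    unfolding g(2)[symmetric] using g(1) by (auto simp: strict_mono_less)
  then have span_eq: "span (x ` {i \<in> S. i < g k}) = span (x ` g ` {..<k})"
    by (metis span_greedy_indices_prefix)
  have "(\<lambda>j. x (t j)) ` {..k} \<subseteq> span (x ` g ` {..<k})"
  proof (rule image_subsetI)
    fix j assume "j \<in> {..k}"
    then have "t j < g k"
      using less strict_mono_less_eq[OF t(1)] by (metis atMost_iff le_less_trans)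
    then have "x (t j) \<in> span (x ` {i \<in> S. i < g k})"
      using t(2) by (intro span_base) auto
    then show "x (t j) \<in> span (x ` g ` {..<k})"
      unfolding span_eq[symmetric] .
  qed
  moreover have "independent ((\<lambda>j. x (t j)) ` {..k})"
    using indep(2) by (rule independent_mono) auto
  ultimately have "card ((\<lambda>j. x (t j)) ` {..k}) \<le> card (x ` g ` {..<k})"
    using independent_span_bound[of "x ` g ` {..<k}"] by simp
  also have "\<dots> \<le> card {..<k}"
    by (metis card_image_le finite image_image)
  also have "\<dots> < card {..k}"
    by (intro psubset_card_mono) auto
  also have "\<dots> = card ((\<lambda>j. x (t j)) ` {..k})"
    using indep(1) by (simp add: card_image inj_on_subset)
  finally show False by simp
qed

lemma ex_greedy_enumeration:
  fixes x :: "nat \<Rightarrow> real ^ 'n::{finite,linorder}"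
  assumes "span (x ` S) = UNIV"
  obtains g :: "'n \<Rightarrow> nat"
  where "strict_mono g" "range g = greedy_indices x S" "det (\<chi> j. x (g j)) \<noteq> 0"
proof -
  have "card (greedy_indices x S) = CARD('n)"
    using card_greedy_indices[of x S] assms by (metis dim_span dim_vec_eq vec_dim_card)
  then obtain g :: "'n \<Rightarrow> nat" where g: "strict_mono g" "range g = greedy_indices x S"
    using ex_strict_mono_onto_finite[OF finite_greedy_indices] by blast
  have "inj (x \<circ> g)"
    using comp_inj_on[OF strict_mono_imp_inj_on[OF g(1)]] inj_on_greedy_indices g(2) by metis
  moreover have "range (x \<circ> g) = x ` greedy_indices x S"
    using g(2) by (metis image_comp)
  ultimately have "det (\<chi> j. x (g j)) \<noteq> 0"
    using independent_greedy_indices by (simp add: det_rows_nonzero_iff comp_def)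
  with g that show ?thesis by blast
qed

lemma greedy_enumeration_eq_if_det_nonzero:
  fixes x :: "nat \<Rightarrow> real ^ 'n::{finite,linorder}"
  assumes g: "strict_mono g" "range g = greedy_indices x S"
    and t: "strict_mono t" "range t \<subseteq> S" "sum t UNIV \<le> sum g UNIV"
    and det: "det (\<chi> j. x (t j)) \<noteq> 0"
  shows "t = g"
proof -
  have "inj (\<lambda>j. x (t j))" "independent (range (\<lambda>j. x (t j)))"
    using det by (simp_all add: det_rows_nonzero_iff)
  then have le: "g k \<le> t k" for k
    using greedy_indices_enumeration_le[OF g t(1,2)] by blast
  then have "sum g UNIV = sum t UNIV"
    using t(3) sum_mono[of UNIV g t] by simp
  with le show "t = g"
    using sum_mono_inv by (metis finite UNIV_I ext)
qed

lemma finite_functions_sum_eq: "finite {t :: 'a::finite \<Rightarrow> nat. sum t UNIV = m}"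
proof (rule finite_subset)
  show "{t :: 'a \<Rightarrow> nat. sum t UNIV = m} \<subseteq> PiE UNIV (\<lambda>_. {..m})"
  proof
    fix t :: "'a \<Rightarrow> nat" assume "t \<in> {t. sum t UNIV = m}"
    then have "t i \<le> m" for i
      using member_le_sum[of i UNIV t] by simp
    then show "t \<in> PiE UNIV (\<lambda>_. {..m})"
      by (simp add: PiE_UNIV_domain)
  qed
  show "finite (PiE (UNIV :: 'a set) (\<lambda>_. {..m}))"
    by (intro finite_PiE) auto
qed

theorem lemma1:
  fixes x :: "nat \<Rightarrow> real ^ ('n::{finite,wellorder})"
    and C :: "('n::{finite,wellorder} \<Rightarrow> nat) \<Rightarrow> real"
  assumes C_nonzero: "\<And>t. C t \<noteq> 0"
    and sums_zero: "\<And>m::nat.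
      (\<Sum>t\<in>{t :: 'n::{finite,wellorder} \<Rightarrow> nat. strict_mono t \<and> (\<forall>i. 0 < t i) \<and> sum t UNIV = m}.
          C t * det (transpose (\<chi> j. x (t j)))) = 0"
  shows "\<exists>V :: (real ^ 'n::{finite,wellorder}) set. subspace V \<and> V \<noteq> UNIV \<and> (\<forall>i\<ge>1. x i \<in> V)"
proof (rule ccontr)
  assume no_subspace: "\<not> ?thesis"
  define S where "S = {i :: nat. 0 < i}"
  have "\<forall>i\<ge>1. x i \<in> span (x ` S)"
    by (auto simp: S_def intro: span_base)
  then have "span (x ` S) = UNIV"
    using no_subspace subspace_span by blast
  then obtain g where g: "strict_mono g" "range g = greedy_indices x S"
    and det_g: "det (\<chi> j. x (g j)) \<noteq> 0"
    by (rule ex_greedy_enumeration)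
  define A where "A = {t :: 'n \<Rightarrow> nat. strict_mono t \<and> (\<forall>i. 0 < t i) \<and> sum t UNIV = sum g UNIV}"
  have "g \<in> A"
    using g by (auto simp: A_def S_def greedy_indices_def)
  have "det (\<chi> j. x (t j)) = 0" if "t \<in> A - {g}" for t
    using that greedy_enumeration_eq_if_det_nonzero[OF g, of t] by (auto simp: A_def S_def)
  moreover have "finite A"
    by (rule finite_subset[OF _ finite_functions_sum_eq]) (auto simp: A_def)
  ultimately have "(\<Sum>t\<in>A. C t * det (transpose (\<chi> j. x (t j)))) = C g * det (\<chi> j. x (g j))"
    by (simp add: det_transpose sum.remove[OF _ \<open>g \<in> A\<close>] sum.neutral)
  with sums_zero[of "sum g UNIV"] C_nonzero[of g] det_g show False
    by (simp add: A_def)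
qed

end
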